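(* Let $K$ be an algebraically closed field of characteristic zero, $\deg_1$ a positive weighted homogeneous degree on $K[x_1,\dots,x_n]$, and $R\in K[x_1,\dots,x_n]\setminus K$ an irreducible $\deg_1$-homogeneous polynomial. If there exists a nonzero locally nilpotent derivation $D$ of $K[x_1,\dots,x_n]$ with $D(R)=0$, then the quotient ring $K[x_1,\dots,x_n]/(R)$ admits a nonzero weighted homogeneous locally nilpotent derivation.
   Context: A p.w.h. degree assigns positive real weights to the variables; the quotient is graded accordingly, and a derivation is weighted homogeneous (of degree $r$) if it maps homogeneous elements of degree $m$ to homogeneous elements of degree $m+r$. *)

theory Defs
  imports "HOL-Library.Poly_Mapping" "HOL-Computational_Algebra.Polynomial"
begin

type_synonym ('n, 'k) mpoly = "('n \<Rightarrow>\<^sub>0 nat) \<Rightarrow>\<^sub>0 'k"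

definition alg_closed :: "'k::field itself \<Rightarrow> bool" where
  "alg_closed _ \<longleftrightarrow> (\<forall>p :: 'k poly. degree p > 0 \<longrightarrow> (\<exists>x. poly p x = 0))"

definition const :: "'k::zero \<Rightarrow> ('n, 'k) mpoly" where
  "const c = Poly_Mapping.single 0 c"

definition pos_weights :: "('n \<Rightarrow> real) \<Rightarrow> bool" where
  "pos_weights w \<longleftrightarrow> (\<forall>i. w i > 0)"

definition wdeg :: "('n::finite \<Rightarrow> real) \<Rightarrow> ('n \<Rightarrow>\<^sub>0 nat) \<Rightarrow> real" where
  "wdeg w m = (\<Sum>i\<in>UNIV. w i * real (Poly_Mapping.lookup m i))"

definition whomog :: "('n::finite \<Rightarrow> real) \<Rightarrow> real \<Rightarrow> ('n, 'k::zero) mpoly \<Rightarrow> bool" where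
  "whomog w d p \<longleftrightarrow> (\<forall>m\<in>Poly_Mapping.keys p. wdeg w m = d)"

definition is_derivation :: "(('n, 'k::comm_ring_1) mpoly \<Rightarrow> ('n, 'k) mpoly) \<Rightarrow> bool" where
  "is_derivation D \<longleftrightarrow>
     (\<forall>f g. D (f + g) = D f + D g) \<and>
     (\<forall>c f. D (const c * f) = const c * D f) \<and>
     (\<forall>f g. D (f * g) = f * D g + g * D f)"

definition locally_nilpotent :: "('a \<Rightarrow> 'a::zero) \<Rightarrow> bool" where
  "locally_nilpotent D \<longleftrightarrow> (\<forall>f. \<exists>k. (D ^^ k) f = 0)"

definition cls :: "'a::comm_ring_1 \<Rightarrow> 'a \<Rightarrow> 'a set" where
  "cls R f = {f + R * h | h. True}"

definition quot :: "'a::comm_ring_1 \<Rightarrow> 'a set set" where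
  "quot R = range (cls R)"

definition qadd :: "'a::comm_ring_1 \<Rightarrow> 'a set \<Rightarrow> 'a set \<Rightarrow> 'a set" where
  "qadd R X Y = cls R ((SOME x. x \<in> X) + (SOME y. y \<in> Y))"

definition qmul :: "'a::comm_ring_1 \<Rightarrow> 'a set \<Rightarrow> 'a set \<Rightarrow> 'a set" where
  "qmul R X Y = cls R ((SOME x. x \<in> X) * (SOME y. y \<in> Y))"

definition qscale :: "('n, 'k::comm_ring_1) mpoly \<Rightarrow> 'k \<Rightarrow> ('n, 'k) mpoly set \<Rightarrow> ('n, 'k) mpoly set" where
  "qscale R c X = cls R (const c * (SOME x. x \<in> X))"

definition is_qderivation :: "('n, 'k::comm_ring_1) mpoly \<Rightarrow> (('n, 'k) mpoly set \<Rightarrow> ('n, 'k) mpoly set) \<Rightarrow> bool" where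
  "is_qderivation R d \<longleftrightarrow>
     (\<forall>X\<in>quot R. d X \<in> quot R) \<and>
     (\<forall>X\<in>quot R. \<forall>Y\<in>quot R. d (qadd R X Y) = qadd R (d X) (d Y)) \<and>
     (\<forall>c. \<forall>X\<in>quot R. d (qscale R c X) = qscale R c (d X)) \<and>
     (\<forall>X\<in>quot R. \<forall>Y\<in>quot R. d (qmul R X Y) = qadd R (qmul R X (d Y)) (qmul R Y (d X)))"

definition q_locally_nilpotent :: "('n, 'k::comm_ring_1) mpoly \<Rightarrow> (('n, 'k) mpoly set \<Rightarrow> ('n, 'k) mpoly set) \<Rightarrow> bool" where
  "q_locally_nilpotent R d \<longleftrightarrow> (\<forall>X\<in>quot R. \<exists>k. (d ^^ k) X = cls R 0)"

definition qhomog :: "('n::finite \<Rightarrow> real) \<Rightarrow> ('n, 'k::comm_ring_1) mpoly \<Rightarrow> real \<Rightarrow> ('n, 'k) mpoly set \<Rightarrow> bool" where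
  "qhomog w R m X \<longleftrightarrow> (\<exists>p. whomog w m p \<and> X = cls R p)"

definition q_whomog_derivation :: "('n::finite \<Rightarrow> real) \<Rightarrow> ('n, 'k::comm_ring_1) mpoly \<Rightarrow> (('n, 'k) mpoly set \<Rightarrow> ('n, 'k) mpoly set) \<Rightarrow> bool" where
  "q_whomog_derivation w R d \<longleftrightarrow>
     (\<exists>r::real. \<forall>m X. qhomog w R m X \<longrightarrow> qhomog w R (m + r) (d X))"

end

theory Submission
  imports Defs
begin

text \<open>Let \<open>D\<close> be a nonzero locally nilpotent derivation with \<open>D R = 0\<close>, and let \<open>r\<close> be the largest
  shift \<open>deg k - w i\<close> over the monomials \<open>k\<close> of the images \<open>D x\<^sub>i\<close>. The degree-\<open>r\<close> component of \<open>D\<close>,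
  i.e. the derivation sending a monomial \<open>m\<close> to the degree \<open>deg m + r\<close> part of \<open>D m\<close>, is again a
  locally nilpotent derivation killing \<open>R\<close>; it is weighted homogeneous of degree \<open>r\<close> and nonzero.
  As long as \<open>R\<close> divides all images of the variables, a homogeneous locally nilpotent derivation
  \<open>E\<close> with \<open>E R = 0\<close> factors as \<open>E = R E'\<close>, and \<open>E'\<close> is of the same kind with degree lowered by
  \<open>deg R > 0\<close>. Degrees of nonzero images of variables are nonnegative, so this descent stops at a
  derivation \<open>F\<close> with \<open>R \<not> dvd F x\<^sub>j\<close> for some \<open>j\<close>; since \<open>F\<close> kills \<open>R\<close>, it induces the required
  derivation of \<open>K[x]/(R)\<close>, which does not vanish on the class of \<open>x\<^sub>j\<close>.\<close>

lemma wdeg_add: "wdeg w (a + b) = wdeg w a + wdeg w b"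
  unfolding wdeg_def by (simp add: lookup_add algebra_simps sum.distrib)

text \<open>Stated with \<open>Suc 0\<close>, the simp normal form of \<open>1 :: nat\<close>.\<close>

lemma wdeg_single_Suc_0 [simp]: "wdeg w (Poly_Mapping.single (i::'n::finite) (Suc 0)) = w i"
proof -
  have "wdeg w (Poly_Mapping.single i (Suc 0)) = (\<Sum>j\<in>UNIV. if j = i then w i else 0)"
    unfolding wdeg_def by (rule sum.cong) (auto simp: lookup_single when_def)
  then show ?thesis by simp
qed

lemma wdeg_nonneg: "pos_weights w \<Longrightarrow> wdeg w m \<ge> 0"
  unfolding wdeg_def pos_weights_def by (intro sum_nonneg) (simp add: less_imp_le)

lemma wdeg_pos:
  assumes "pos_weights w" "m \<noteq> 0"
  shows "wdeg w m > 0"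
proof -
  obtain i where "Poly_Mapping.lookup m i \<noteq> 0"
    using assms(2) poly_mapping_eqI[of m 0] by auto
  then show ?thesis
    using assms(1) unfolding wdeg_def pos_weights_def
    by (intro sum_pos2[of UNIV i]) (auto simp: less_imp_le)
qed

lemma const_0 [simp]: "const 0 = 0"
  unfolding const_def by simp

lemma lookup_const_mult: "Poly_Mapping.lookup (const c * p) m = c * Poly_Mapping.lookup p m"
proof -
  have "const c * p = Poly_Mapping.map ((*) c) p"
    unfolding const_def by (simp add: mult_map_scale_conv_mult)
  then show ?thesis by (simp add: map.rep_eq when_def)
qed

lemma keys_const_mult: "Poly_Mapping.keys (const c * p) \<subseteq> Poly_Mapping.keys p"
  by (auto simp: in_keys_iff lookup_const_mult)

lemma keys_single_mult:
  assumes "k \<in> Poly_Mapping.keys (Poly_Mapping.single m c * q)"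
  obtains y where "y \<in> Poly_Mapping.keys q" "k = m + y"
  using keys_mult[of "Poly_Mapping.single m c" q] assms by (auto split: if_splits)

lemma single_eq_const_mult:
  "Poly_Mapping.single m c = const c * Poly_Mapping.single m (1::'k::comm_ring_1)"
  unfolding const_def by (simp add: mult_single)

lemma sum_single_lookup:
  "(\<Sum>m\<in>Poly_Mapping.keys p. Poly_Mapping.single m (Poly_Mapping.lookup p m)) = p"
  by (rule poly_mapping_eqI)
     (auto simp: lookup_sum lookup_single when_def in_keys_iff sum.delta)

lemma eq_const_if_keys_subset_0:
  assumes "Poly_Mapping.keys p \<subseteq> {0}"
  shows "p = const (Poly_Mapping.lookup p 0)"
  by (rule poly_mapping_eqI) (use assms in \<open>auto simp: const_def lookup_single when_def in_keys_iff\<close>)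

lemma additive_sum:
  fixes L :: "'a::comm_monoid_add \<Rightarrow> 'b::cancel_comm_monoid_add"
  assumes "\<And>x y. L (x + y) = L x + L y"
  shows "L (sum f A) = (\<Sum>a\<in>A. L (f a))"
proof -
  have "L 0 = 0" using assms[of 0 0] by simp
  from sum_comp_morphism[of L f A, OF this assms] show ?thesis unfolding comp_def by (rule sym)
qed

lemma funpow_additive:
  fixes L :: "'a::cancel_comm_monoid_add \<Rightarrow> 'a"
  assumes "\<And>x y. L (x + y) = L x + L y"
  shows "(L ^^ k) (x + y) = (L ^^ k) x + (L ^^ k) y"
  by (induction k arbitrary: x y) (simp_all add: assms)

abbreviation mvar :: "'n \<Rightarrow> ('n, 'k::{zero,one}) mpoly" where
  "mvar i \<equiv> Poly_Mapping.single (Poly_Mapping.single i 1) 1"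

lemma single_add_mvar:
  "Poly_Mapping.single (m + Poly_Mapping.single i 1) (1::'k::comm_ring_1) =
   Poly_Mapping.single m 1 * mvar i"
  by (simp add: mult_single)

lemma exponent_induct [case_names zero add_var]:
  assumes "P 0" "\<And>m i. P m \<Longrightarrow> P (m + Poly_Mapping.single i 1)"
  shows "P (m::'n::finite \<Rightarrow>\<^sub>0 nat)"
proof -
  have "sum (Poly_Mapping.lookup m) UNIV = N \<Longrightarrow> P m" for N m
  proof (induction N arbitrary: m)
    case 0
    then have "m = 0" by (intro poly_mapping_eqI) simp
    then show ?case using assms(1) by simp
  next
    case (Suc N m)
    then obtain i where i: "Poly_Mapping.lookup m i > 0"
      by (metis gr0I sum.neutral nat.distinct(1))
    define m' where "m' = m - Poly_Mapping.single i 1"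
    have m: "m = m' + Poly_Mapping.single i 1"
      by (rule poly_mapping_eqI)
         (use i in \<open>auto simp: m'_def lookup_add lookup_minus lookup_single when_def\<close>)
    then have "sum (Poly_Mapping.lookup m') UNIV = N"
      using Suc.prems by (simp add: lookup_add sum.distrib lookup_single when_def)
    then show ?case using Suc.IH assms(2) m by metis
  qed
  then show ?thesis by blast
qed

subsection \<open>Weighted homogeneous components\<close>

definition wpart :: "('n::finite \<Rightarrow> real) \<Rightarrow> real \<Rightarrow> ('n, 'k::zero) mpoly \<Rightarrow> ('n, 'k) mpoly" where
  "wpart w d p = Abs_poly_mapping (\<lambda>m. if wdeg w m = d then Poly_Mapping.lookup p m else 0)"

lemma lookup_wpart:
  "Poly_Mapping.lookup (wpart w d p) m = (if wdeg w m = d then Poly_Mapping.lookup p m else 0)"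
proof -
  have "finite {m. (if wdeg w m = d then Poly_Mapping.lookup p m else 0) \<noteq> 0}"
    by (rule finite_subset[of _ "Poly_Mapping.keys p"]) (auto simp: in_keys_iff)
  then show ?thesis unfolding wpart_def by simp
qed

lemma keys_wpart: "Poly_Mapping.keys (wpart w d p) = {m \<in> Poly_Mapping.keys p. wdeg w m = d}"
  by (auto simp: in_keys_iff lookup_wpart split: if_splits)

lemma whomog_wpart: "whomog w d (wpart w d p)"
  unfolding whomog_def keys_wpart by auto

lemma wpart_eq_self: "whomog w d p \<Longrightarrow> wpart w d p = p"
  by (rule poly_mapping_eqI) (auto simp: lookup_wpart whomog_def in_keys_iff)

lemma whomog_iff_wpart: "whomog w d p \<longleftrightarrow> wpart w d p = p"
  by (metis whomog_wpart wpart_eq_self)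

lemma wpart_eq_0: "(\<And>m. m \<in> Poly_Mapping.keys p \<Longrightarrow> wdeg w m \<noteq> d) \<Longrightarrow> wpart w d p = 0"
  by (rule poly_mapping_eqI) (auto simp: lookup_wpart in_keys_iff)

lemma wpart_0 [simp]: "wpart w d 0 = 0"
  by (rule wpart_eq_0) simp

lemma wpart_add: "wpart w d (p + q) = wpart w d p + wpart w d (q::('n::finite, 'k::comm_monoid_add) mpoly)"
  by (rule poly_mapping_eqI) (simp add: lookup_wpart lookup_add)

lemma wpart_diff: "wpart w d (p - q) = wpart w d p - wpart w d (q::('n::finite, 'k::ab_group_add) mpoly)"
  by (rule poly_mapping_eqI) (simp add: lookup_wpart lookup_minus)

lemma wpart_sum: "wpart w d (sum f A) = (\<Sum>a\<in>A. wpart w d (f a :: ('n::finite, 'k::comm_monoid_add) mpoly))"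
  by (rule poly_mapping_eqI) (simp add: lookup_wpart lookup_sum)

lemma wpart_const_mult: "wpart w d (const c * p) = const c * wpart w d (p::('n::finite, 'k::comm_ring_1) mpoly)"
  by (rule poly_mapping_eqI) (simp add: lookup_wpart lookup_const_mult)

lemma whomog_single: "whomog w (wdeg w m) (Poly_Mapping.single m c)"
  unfolding whomog_def by simp

lemma whomog_mvar: "whomog w (w i) (mvar i :: ('n::finite, 'k::{zero,one}) mpoly)"
  using whomog_single[of w "Poly_Mapping.single i 1" 1] by simp

lemma whomog_mult:
  assumes "whomog w a p" "whomog w b (q::('n::finite, 'k::comm_ring_1) mpoly)"
  shows "whomog w (a + b) (p * q)"
  unfolding whomog_def
proof
  fix m assume "m \<in> Poly_Mapping.keys (p * q)"
  then obtain x y where "x \<in> Poly_Mapping.keys p" "y \<in> Poly_Mapping.keys q" "m = x + y"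
    using keys_mult by blast
  then show "wdeg w m = a + b" using assms by (simp add: whomog_def wdeg_add)
qed

lemma wpart_mult_whomog:
  fixes R g :: "('n::finite, 'k::comm_ring_1) mpoly"
  assumes "whomog w e R"
  shows "wpart w (a + e) (R * g) = R * wpart w a g"
proof -
  define h where "h = g - wpart w a g"
  have "wpart w (a + e) (R * wpart w a g) = R * wpart w a g"
    by (rule wpart_eq_self) (metis add.commute assms whomog_wpart whomog_mult)
  moreover have "wpart w (a + e) (R * h) = 0"
  proof (rule wpart_eq_0)
    fix m assume "m \<in> Poly_Mapping.keys (R * h)"
    then obtain x y where "x \<in> Poly_Mapping.keys R" "y \<in> Poly_Mapping.keys h" "m = x + y"
      using keys_mult by blast
    moreover have "wdeg w y \<noteq> a" if "y \<in> Poly_Mapping.keys h" for y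
      using that by (auto simp: h_def in_keys_iff lookup_minus lookup_wpart)
    ultimately show "wdeg w m \<noteq> a + e" using assms by (auto simp: whomog_def wdeg_add)
  qed
  moreover have "R * g = R * wpart w a g + R * h" by (simp add: h_def algebra_simps)
  ultimately show ?thesis by (simp add: wpart_add)
qed

type_synonym ('n, 'k) der = "('n, 'k) mpoly \<Rightarrow> ('n, 'k) mpoly"

context
  fixes D :: "('n::finite, 'k::comm_ring_1) der"
  assumes der: "is_derivation D"
begin

lemma derivation_add: "D (f + g) = D f + D g"
  using der unfolding is_derivation_def by blast

lemma derivation_const_mult: "D (const c * f) = const c * D f"
  using der unfolding is_derivation_def by blast

lemma derivation_mult: "D (f * g) = f * D g + g * D f"
  using der unfolding is_derivation_def by blast

lemma derivation_0: "D 0 = 0"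
  using derivation_add[of 0 0] by simp

lemma derivation_diff: "D (f - g) = D f - D g"
  using derivation_add[of "f - g" g] by (simp add: eq_diff_eq)

lemma derivation_sum: "D (sum f A) = (\<Sum>a\<in>A. D (f a))"
  by (rule additive_sum) (rule derivation_add)

lemma derivation_1: "D 1 = 0"
  using derivation_mult[of 1 1] by simp

lemma derivation_mult_kernel: "D R = 0 \<Longrightarrow> D (R * f) = R * D f"
  by (simp add: derivation_mult)

lemma derivation_power_kernel: "D R = 0 \<Longrightarrow> D (R ^ k) = 0"
  by (induction k) (simp_all add: derivation_1 derivation_mult)

lemma derivation_eq_sum_monomials:
  "D p = (\<Sum>m\<in>Poly_Mapping.keys p. const (Poly_Mapping.lookup p m) * D (Poly_Mapping.single m 1))"
proof -
  have "D p = (\<Sum>m\<in>Poly_Mapping.keys p. D (Poly_Mapping.single m (Poly_Mapping.lookup p m)))"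
    by (subst (1) sum_single_lookup[symmetric]) (rule derivation_sum)
  also have "\<dots> = (\<Sum>m\<in>Poly_Mapping.keys p. const (Poly_Mapping.lookup p m) * D (Poly_Mapping.single m 1))"
    by (intro sum.cong refl) (subst single_eq_const_mult, rule derivation_const_mult)
  finally show ?thesis .
qed

lemma derivation_dvd_if_dvd_mvar:
  assumes "\<And>i. R dvd D (mvar i)"
  shows "R dvd D p"
proof -
  have "R dvd D (Poly_Mapping.single m 1)" for m
  proof (induction m rule: exponent_induct)
    case (add_var m i)
    then show ?case unfolding single_add_mvar derivation_mult by (intro dvd_add dvd_mult assms)
  qed (simp add: derivation_1)
  then show ?thesis
    by (subst derivation_eq_sum_monomials) (auto intro!: dvd_sum)
qed

lemma derivation_monomial_keys_le:
  fixes w :: "'n \<Rightarrow> real"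
  assumes shift: "\<And>i k. k \<in> Poly_Mapping.keys (D (mvar i)) \<Longrightarrow> wdeg w k \<le> w i + r"
  shows "\<forall>k\<in>Poly_Mapping.keys (D (Poly_Mapping.single m 1)). wdeg w k \<le> wdeg w m + r"
proof (induction m rule: exponent_induct)
  case zero
  then show ?case by (simp add: derivation_1)
next
  case (add_var m i)
  show ?case
  proof
    fix k assume "k \<in> Poly_Mapping.keys (D (Poly_Mapping.single (m + Poly_Mapping.single i 1) 1))"
    then have "k \<in> Poly_Mapping.keys (Poly_Mapping.single m 1 * D (mvar i)) \<or>
               k \<in> Poly_Mapping.keys (mvar i * D (Poly_Mapping.single m 1))"
      unfolding single_add_mvar derivation_mult using keys_add by (meson UnE subsetD)
    then show "wdeg w k \<le> wdeg w (m + Poly_Mapping.single i 1) + r"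
    proof
      assume "k \<in> Poly_Mapping.keys (Poly_Mapping.single m 1 * D (mvar i))"
      then obtain y where "y \<in> Poly_Mapping.keys (D (mvar i))" "k = m + y"
        by (rule keys_single_mult)
      then show ?thesis using shift[of y i] by (simp add: wdeg_add)
    next
      assume "k \<in> Poly_Mapping.keys (mvar i * D (Poly_Mapping.single m 1))"
      then obtain y where "y \<in> Poly_Mapping.keys (D (Poly_Mapping.single m 1))"
          "k = Poly_Mapping.single i 1 + y"
        by (rule keys_single_mult)
      then show ?thesis using add_var by (auto simp: wdeg_add)
    qed
  qed
qed

lemma derivation_keys_le:
  fixes w :: "'n \<Rightarrow> real"
  assumes shift: "\<And>i k. k \<in> Poly_Mapping.keys (D (mvar i)) \<Longrightarrow> wdeg w k \<le> w i + r"
    and p: "\<And>m. m \<in> Poly_Mapping.keys p \<Longrightarrow> wdeg w m \<le> a"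
    and k: "k \<in> Poly_Mapping.keys (D p)"
  shows "wdeg w k \<le> a + r"
proof -
  have "k \<in> (\<Union>m\<in>Poly_Mapping.keys p.
      Poly_Mapping.keys (const (Poly_Mapping.lookup p m) * D (Poly_Mapping.single m 1)))"
    using k unfolding derivation_eq_sum_monomials[of p] by (rule subsetD[OF keys_sum])
  then obtain m where m: "m \<in> Poly_Mapping.keys p" "k \<in> Poly_Mapping.keys (D (Poly_Mapping.single m 1))"
    using keys_const_mult by blast
  then have "wdeg w k \<le> wdeg w m + r" using derivation_monomial_keys_le[OF shift] by blast
  then show ?thesis using p[OF m(1)] by linarith
qed

end

lemma leibniz_from_monomials:
  fixes L :: "('n::finite, 'k::comm_ring_1) der"
  assumes add: "\<And>x y. L (x + y) = L x + L y"
    and mono: "\<And>a b c c'. L (Poly_Mapping.single a c * Poly_Mapping.single b c') =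
       Poly_Mapping.single a c * L (Poly_Mapping.single b c') + Poly_Mapping.single b c' * L (Poly_Mapping.single a c)"
  shows "L (f * g) = f * L g + g * L f"
proof -
  note L_sum = additive_sum[of L, OF add]
  define sf where "sf a = Poly_Mapping.single a (Poly_Mapping.lookup f a)" for a
  define sg where "sg b = Poly_Mapping.single b (Poly_Mapping.lookup g b)" for b
  let ?F = "Poly_Mapping.keys f" and ?G = "Poly_Mapping.keys g"
  have f: "f = (\<Sum>a\<in>?F. sf a)" and g: "g = (\<Sum>b\<in>?G. sg b)"
    unfolding sf_def sg_def by (simp_all add: sum_single_lookup)
  have "f * g = (\<Sum>a\<in>?F. \<Sum>b\<in>?G. sf a * sg b)"
    by (subst f, subst g) (rule sum_product)
  then have "L (f * g) = (\<Sum>a\<in>?F. \<Sum>b\<in>?G. sf a * L (sg b) + sg b * L (sf a))"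
    by (simp add: L_sum mono sf_def sg_def)
  also have "\<dots> = (\<Sum>a\<in>?F. sf a) * (\<Sum>b\<in>?G. L (sg b)) + (\<Sum>b\<in>?G. sg b) * (\<Sum>a\<in>?F. L (sf a))"
    by (simp add: sum.distrib sum_distrib_left sum_distrib_right sum.swap[of _ ?G])
  also have "\<dots> = f * L g + g * L f"
    by (subst (3 4) f, subst (1 2) g) (simp add: L_sum)
  finally show ?thesis .
qed

lemma locally_nilpotent_from_monomials:
  fixes L :: "('n, 'k::comm_ring_1) der"
  assumes add: "\<And>x y. L (x + y) = L x + L y"
    and mono: "\<And>m c. \<exists>k. (L ^^ k) (Poly_Mapping.single m c) = 0"
  shows "locally_nilpotent L"
  unfolding locally_nilpotent_def
proof
  fix p
  obtain kf where kf: "\<And>m c. (L ^^ kf m c) (Poly_Mapping.single m c) = 0"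
    using mono by metis
  define K where "K = Max (insert 0 ((\<lambda>m. kf m (Poly_Mapping.lookup p m)) ` Poly_Mapping.keys p))"
  have L0: "(L ^^ j) 0 = 0" for j
    using funpow_additive[OF add, of j 0 0] by simp
  have "(L ^^ K) (Poly_Mapping.single m (Poly_Mapping.lookup p m)) = 0"
    if "m \<in> Poly_Mapping.keys p" for m
  proof -
    have "kf m (Poly_Mapping.lookup p m) \<le> K" unfolding K_def using that by simp
    then obtain j where "K = j + kf m (Poly_Mapping.lookup p m)" by (metis le_add_diff_inverse2)
    then show ?thesis by (simp add: funpow_add kf L0)
  qed
  moreover have "(L ^^ K) p =
      (\<Sum>m\<in>Poly_Mapping.keys p. (L ^^ K) (Poly_Mapping.single m (Poly_Mapping.lookup p m)))"
    by (subst (1) sum_single_lookup[symmetric]) (rule additive_sum[OF funpow_additive[OF add]])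
  ultimately show "\<exists>k. (L ^^ k) p = 0" by auto
qed

subsection \<open>The homogeneous component of a derivation\<close>

definition der_part :: "('n::finite \<Rightarrow> real) \<Rightarrow> real \<Rightarrow> ('n, 'k::comm_ring_1) der \<Rightarrow> ('n, 'k) der" where
  "der_part w r D p = (\<Sum>m\<in>Poly_Mapping.keys p.
     wpart w (wdeg w m + r) (D (Poly_Mapping.single m (Poly_Mapping.lookup p m))))"

context
  fixes D :: "('n::finite, 'k::comm_ring_1) der"
  assumes der: "is_derivation D"
begin

lemma der_part_whomog:
  assumes "whomog w e p"
  shows "der_part w r D p = wpart w (e + r) (D p)"
proof -
  have "der_part w r D p = (\<Sum>m\<in>Poly_Mapping.keys p.
      wpart w (e + r) (D (Poly_Mapping.single m (Poly_Mapping.lookup p m))))"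
    unfolding der_part_def by (rule sum.cong) (use assms in \<open>auto simp: whomog_def\<close>)
  also have "\<dots> = wpart w (e + r) (D (\<Sum>m\<in>Poly_Mapping.keys p. Poly_Mapping.single m (Poly_Mapping.lookup p m)))"
    by (simp add: wpart_sum derivation_sum[OF der])
  also have "\<dots> = wpart w (e + r) (D p)"
    by (simp only: sum_single_lookup)
  finally show ?thesis .
qed

lemma der_part_eq_sum_superset:
  assumes "finite S" "Poly_Mapping.keys p \<subseteq> S"
  shows "der_part w r D p = (\<Sum>m\<in>S. wpart w (wdeg w m + r) (D (Poly_Mapping.single m (Poly_Mapping.lookup p m))))"
  unfolding der_part_def
  by (rule sum.mono_neutral_left) (use assms in \<open>auto simp: in_keys_iff derivation_0[OF der]\<close>)

lemma der_part_add: "der_part w r D (p + q) = der_part w r D p + der_part w r D q"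
proof -
  let ?S = "Poly_Mapping.keys p \<union> Poly_Mapping.keys q"
  have "Poly_Mapping.keys (p + q) \<subseteq> ?S" by (rule keys_add)
  then show ?thesis
    by (simp add: der_part_eq_sum_superset[of ?S] lookup_add single_add
        derivation_add[OF der] wpart_add sum.distrib)
qed

lemma der_part_const_mult: "der_part w r D (const c * p) = const c * der_part w r D p"
proof -
  have "Poly_Mapping.single m (Poly_Mapping.lookup (const c * p) m) =
        const c * Poly_Mapping.single m (Poly_Mapping.lookup p m)" for m
    by (rule poly_mapping_eqI) (simp add: lookup_const_mult lookup_single when_def)
  moreover have "Poly_Mapping.keys (const c * p) \<subseteq> Poly_Mapping.keys p" by (rule keys_const_mult)
  ultimately show ?thesis
    by (simp add: der_part_eq_sum_superset[of "Poly_Mapping.keys p"]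
        derivation_const_mult[OF der] wpart_const_mult sum_distrib_left)
qed

lemma der_part_single_mult:
  "der_part w r D (Poly_Mapping.single a c * Poly_Mapping.single b c') =
   Poly_Mapping.single a c * der_part w r D (Poly_Mapping.single b c') +
   Poly_Mapping.single b c' * der_part w r D (Poly_Mapping.single a c)"
proof -
  let ?A = "wdeg w a" and ?B = "wdeg w b"
  let ?sa = "Poly_Mapping.single a c" and ?sb = "Poly_Mapping.single b c'"
  have "der_part w r D (?sa * ?sb) = wpart w (?A + ?B + r) (D (?sa * ?sb))"
    by (rule der_part_whomog) (intro whomog_mult whomog_single)
  also have "\<dots> = wpart w ((?B + r) + ?A) (?sa * D ?sb) + wpart w ((?A + r) + ?B) (?sb * D ?sa)"
    by (simp add: derivation_mult[OF der] wpart_add algebra_simps)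
  also have "\<dots> = ?sa * der_part w r D ?sb + ?sb * der_part w r D ?sa"
    by (simp add: wpart_mult_whomog whomog_single der_part_whomog[OF whomog_single])
  finally show ?thesis .
qed

lemma is_derivation_der_part: "is_derivation (der_part w r D)"
  unfolding is_derivation_def
  by (intro conjI allI der_part_add der_part_const_mult
      leibniz_from_monomials[of "der_part w r D", OF der_part_add der_part_single_mult])

lemma whomog_der_part: "whomog w e p \<Longrightarrow> whomog w (e + r) (der_part w r D p)"
  by (simp add: der_part_whomog whomog_wpart)

context
  fixes w :: "'n \<Rightarrow> real" and r :: real
  assumes shift: "\<And>i k. k \<in> Poly_Mapping.keys (D (mvar i)) \<Longrightarrow> wdeg w k \<le> w i + r"
begin

text \<open>If \<open>r\<close> bounds the degree shift of \<open>D\<close>, the degree-\<open>r\<close> component of \<open>D\<close> sees only the top part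
  of its argument; hence its iterates are the top parts of the iterates of \<open>D\<close>.\<close>

lemma der_part_wpart_top:
  assumes "\<And>m. m \<in> Poly_Mapping.keys g \<Longrightarrow> wdeg w m \<le> a"
  shows "der_part w r D (wpart w a g) = wpart w (a + r) (D g)"
proof -
  define h where "h = g - wpart w a g"
  have "wpart w (a + r) (D h) = 0"
  proof (cases "h = 0")
    case False
    define a' where "a' = Max (wdeg w ` Poly_Mapping.keys h)"
    have "wdeg w m < a" if "m \<in> Poly_Mapping.keys h" for m
      using that assms by (fastforce simp: h_def in_keys_iff lookup_minus lookup_wpart split: if_splits)
    then have "a' < a" using False by (simp add: a'_def)
    moreover have "\<And>m. m \<in> Poly_Mapping.keys h \<Longrightarrow> wdeg w m \<le> a'" by (simp add: a'_def)
    ultimately show ?thesis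
      by (intro wpart_eq_0) (use derivation_keys_le[OF der shift] in fastforce)
  qed (simp add: derivation_0[OF der])
  then show ?thesis
    by (simp add: h_def der_part_whomog[OF whomog_wpart] derivation_diff[OF der] wpart_diff)
qed

lemma der_part_funpow:
  assumes "whomog w a s"
  shows "(der_part w r D ^^ k) s = wpart w (a + real k * r) ((D ^^ k) s)"
proof -
  have bound: "\<And>m. m \<in> Poly_Mapping.keys ((D ^^ k) s) \<Longrightarrow> wdeg w m \<le> a + real k * r" for k
  proof (induction k)
    case 0
    then show ?case using assms by (simp add: whomog_def)
  next
    case (Suc k)
    then show ?case using derivation_keys_le[OF der shift Suc.IH] by (simp add: algebra_simps)
  qed
  show ?thesis
  proof (induction k)
    case 0
    then show ?case using assms by (simp add: wpart_eq_self)
  next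
    case (Suc k)
    then show ?case using der_part_wpart_top[OF bound] by (simp add: algebra_simps)
  qed
qed

lemma locally_nilpotent_der_part:
  assumes "locally_nilpotent D"
  shows "locally_nilpotent (der_part w r D)"
proof (rule locally_nilpotent_from_monomials[OF der_part_add])
  fix m c
  obtain k where "(D ^^ k) (Poly_Mapping.single m c) = 0"
    using assms unfolding locally_nilpotent_def by blast
  then show "\<exists>k. (der_part w r D ^^ k) (Poly_Mapping.single m c) = 0"
    using der_part_funpow[OF whomog_single[of w m c], of k] by auto
qed

end

end

subsection \<open>Homogeneous locally nilpotent derivations annihilating \<open>R\<close>\<close>

definition whomog_lnd :: "('n::finite \<Rightarrow> real) \<Rightarrow> ('n, 'k::comm_ring_1) mpoly \<Rightarrow> ('n, 'k) der \<Rightarrow> real \<Rightarrow> bool" where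
  "whomog_lnd w R E s \<longleftrightarrow> is_derivation E \<and> locally_nilpotent E \<and> E R = 0 \<and>
     (\<forall>d p. whomog w d p \<longrightarrow> whomog w (d + s) (E p))"

lemma exists_whomog_lnd:
  fixes D :: "('n::finite, 'k::comm_ring_1) der"
  assumes der: "is_derivation D" and "locally_nilpotent D" "D \<noteq> (\<lambda>_. 0)" "D R = 0" "whomog w e R"
  shows "\<exists>E s i. whomog_lnd w R E s \<and> E (mvar i) \<noteq> 0"
proof -
  have "\<exists>i. D (mvar i) \<noteq> 0"
    using derivation_dvd_if_dvd_mvar[OF der, of 0] assms(3) by auto
  then obtain i0 where i0: "D (mvar i0) \<noteq> 0" by blast
  define S where "S = (\<Union>i. (\<lambda>k. wdeg w k - w i) ` Poly_Mapping.keys (D (mvar i)))"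
  have S: "finite S" "S \<noteq> {}"
    using i0 unfolding S_def by fastforce+
  define r where "r = Max S"
  have shift: "wdeg w k \<le> w i + r" if "k \<in> Poly_Mapping.keys (D (mvar i))" for i k
    using that S(1) Max_ge[of S "wdeg w k - w i"] unfolding r_def S_def by fastforce
  obtain i k where ik: "k \<in> Poly_Mapping.keys (D (mvar i))" "r = wdeg w k - w i"
    using Max_in[OF S] unfolding r_def S_def by blast
  have "der_part w r D (mvar i) = wpart w (w i + r) (D (mvar i))"
    by (rule der_part_whomog[OF der whomog_mvar])
  then have "Poly_Mapping.lookup (der_part w r D (mvar i)) k \<noteq> 0"
    using ik by (simp add: lookup_wpart in_keys_iff)
  then have "der_part w r D (mvar i) \<noteq> 0" by auto
  moreover have "whomog_lnd w R (der_part w r D) r"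
    unfolding whomog_lnd_def
    using is_derivation_der_part[OF der] locally_nilpotent_der_part[OF der shift assms(2)]
      der_part_whomog[OF der assms(5)] whomog_der_part[OF der] assms(4) by auto
  ultimately show ?thesis by blast
qed

lemma whomog_lnd_divide:
  fixes R :: "('n::{finite,linorder}, 'k::idom) mpoly"
  assumes R0: "R \<noteq> 0" and hR: "whomog w e R" and E: "whomog_lnd w R E s"
    and dvd: "\<And>i. R dvd E (mvar i)"
  shows "\<exists>E'. whomog_lnd w R E' (s - e) \<and> (\<forall>f. E f = R * E' f)"
proof -
  have der: "is_derivation E" and lnd: "locally_nilpotent E" and ER: "E R = 0"
    and hE: "\<And>d p. whomog w d p \<Longrightarrow> whomog w (d + s) (E p)"
    using E unfolding whomog_lnd_def by auto
  have cancel: "R * a = R * b \<Longrightarrow> a = b" for a b using R0 by simp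
  define E' where "E' f = (SOME g. E f = R * g)" for f
  have E': "E f = R * E' f" for f
  proof -
    obtain g where "E f = R * g" using derivation_dvd_if_dvd_mvar[OF der dvd] by (rule dvdE)
    then show ?thesis unfolding E'_def by (rule someI)
  qed
  have "is_derivation E'"
    unfolding is_derivation_def
  proof (intro conjI allI)
    fix f g c
    show "E' (f + g) = E' f + E' g"
      by (rule cancel) (metis E' derivation_add[OF der] distrib_left)
    show "E' (f * g) = f * E' g + g * E' f"
      by (rule cancel) (simp only: E'[symmetric] derivation_mult[OF der], simp add: E' algebra_simps)
    show "E' (const c * f) = const c * E' f"
      by (rule cancel) (simp only: E'[symmetric] derivation_const_mult[OF der], simp add: E' algebra_simps)
  qed
  moreover have "E' R = 0" using E'[of R] ER R0 by simp
  moreover have "locally_nilpotent E'"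
  proof -
    have "(E ^^ k) f = R ^ k * (E' ^^ k) f" for k f
    proof (induction k)
      case (Suc k)
      have "(E ^^ Suc k) f = R ^ k * E ((E' ^^ k) f)"
        using Suc derivation_mult[OF der, of "R ^ k"] derivation_power_kernel[OF der ER] by simp
      then show ?case unfolding E'[of "(E' ^^ k) f"] by simp
    qed simp
    then show ?thesis using lnd R0 unfolding locally_nilpotent_def by (metis mult_eq_0_iff power_not_zero)
  qed
  moreover have "whomog w (d + (s - e)) (E' p)" if "whomog w d p" for d p
  proof -
    have "R * wpart w (d + (s - e)) (E' p) = wpart w (d + s) (E p)"
      using wpart_mult_whomog[OF hR, of "d + (s - e)"] by (simp add: E')
    also have "\<dots> = R * E' p" using hE[OF that] by (simp add: wpart_eq_self E')
    finally show ?thesis unfolding whomog_iff_wpart by (rule cancel)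
  qed
  ultimately show ?thesis using E' unfolding whomog_lnd_def by blast
qed

text \<open>\<open>n\<close> bounds the number of divisions by \<open>R\<close>: each lowers the degree by \<open>e > 0\<close>, and a
  nonzero homogeneous image of a variable has degree at least \<open>0\<close>.\<close>

lemma whomog_lnd_not_dvd_mvar:
  fixes R :: "('n::{finite,linorder}, 'k::idom) mpoly"
  assumes R0: "R \<noteq> 0" and hR: "whomog w e R" and pw: "pos_weights w" and e0: "e > 0"
  shows "whomog_lnd w R E s \<Longrightarrow> E (mvar i) \<noteq> 0 \<Longrightarrow> w i + s < real n * e \<Longrightarrow>
     \<exists>F s'. whomog_lnd w R F s' \<and> (\<exists>j. \<not> R dvd F (mvar j))"
proof (induction n arbitrary: E s)
  case 0
  obtain k where "k \<in> Poly_Mapping.keys (E (mvar i))" using "0.prems"(2) by fastforce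
  moreover have "whomog w (w i + s) (E (mvar i))"
    using "0.prems"(1) whomog_mvar[of w i] unfolding whomog_lnd_def by blast
  ultimately have "wdeg w k = w i + s" by (auto simp: whomog_def)
  with wdeg_nonneg[OF pw, of k] "0.prems"(3) show ?case by simp
next
  case (Suc n)
  show ?case
  proof (cases "\<forall>j. R dvd E (mvar j)")
    case True
    then obtain E' where "whomog_lnd w R E' (s - e)" "\<forall>f. E f = R * E' f"
      using whomog_lnd_divide[OF R0 hR Suc.prems(1)] by blast
    moreover have "w i + (s - e) < real n * e" using Suc.prems(3) by (simp add: algebra_simps)
    ultimately show ?thesis using Suc.IH Suc.prems(2) by fastforce
  qed (use Suc.prems(1) in blast)
qed

subsection \<open>The induced derivation of the quotient\<close>

lemma mem_cls: "x \<in> cls R f \<longleftrightarrow> R dvd (x - f)"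
  unfolding cls_def by (auto simp: dvd_def algebra_simps)

lemma cls_eq_iff: "cls R f = cls R g \<longleftrightarrow> R dvd (f - g)"
proof
  assume "cls R f = cls R g"
  then show "R dvd (f - g)" using mem_cls[of f R f] by (simp add: mem_cls)
next
  assume fg: "R dvd (f - g)"
  have "R dvd (x - f) \<longleftrightarrow> R dvd (x - g)" for x
    using dvd_add[OF _ fg, of "x - f"] dvd_diff[OF _ fg, of "x - g"] by auto
  then show "cls R f = cls R g" by (auto simp: mem_cls)
qed

lemma some_cls_dvd: "R dvd ((SOME x. x \<in> cls R f) - f)"
  using someI[of "\<lambda>x. x \<in> cls R f" f] by (simp add: mem_cls)

lemma qadd_cls: "qadd R (cls R f) (cls R g) = cls R (f + g)"
  unfolding qadd_def cls_eq_iff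
  using dvd_add[OF some_cls_dvd[of R f] some_cls_dvd[of R g]] by (simp add: algebra_simps)

lemma qmul_cls: "qmul R (cls R f) (cls R g) = cls R (f * g)"
proof -
  define x y where "x = (SOME x. x \<in> cls R f)" and "y = (SOME y. y \<in> cls R g)"
  have "x * y - f * g = x * (y - g) + g * (x - f)" by (simp add: algebra_simps)
  moreover have "R dvd x * (y - g) + g * (x - f)"
    using some_cls_dvd[of R f] some_cls_dvd[of R g] unfolding x_def y_def by (intro dvd_add dvd_mult)
  ultimately have "R dvd x * y - f * g" by simp
  then show ?thesis unfolding qmul_def cls_eq_iff x_def y_def .
qed

lemma qscale_cls: "qscale R c (cls R f) = cls R (const c * f)"
  unfolding qscale_def cls_eq_iff
  using dvd_mult[OF some_cls_dvd[of R f], of "const c"] by (simp add: algebra_simps)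

lemma quot_cases: "X \<in> quot R \<Longrightarrow> (\<And>f. X = cls R f \<Longrightarrow> thesis) \<Longrightarrow> thesis"
  unfolding quot_def by auto

lemma cls_in_quot: "cls R f \<in> quot R"
  unfolding quot_def by auto

definition qder :: "('n, 'k::comm_ring_1) mpoly \<Rightarrow> ('n, 'k) der \<Rightarrow> ('n, 'k) mpoly set \<Rightarrow> ('n, 'k) mpoly set" where
  "qder R F X = cls R (F (SOME x. x \<in> X))"

context
  fixes F :: "('n::finite, 'k::comm_ring_1) der" and R :: "('n, 'k) mpoly"
  assumes der: "is_derivation F" and FR: "F R = 0"
begin

lemma qder_cls: "qder R F (cls R f) = cls R (F f)"
proof -
  obtain h where "(SOME x. x \<in> cls R f) - f = R * h" using some_cls_dvd by (rule dvdE)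
  then show ?thesis
    unfolding qder_def cls_eq_iff
    by (simp add: derivation_diff[OF der, symmetric] derivation_mult_kernel[OF der FR])
qed

lemma qder_funpow_cls: "(qder R F ^^ k) (cls R f) = cls R ((F ^^ k) f)"
  by (induction k) (simp_all add: qder_cls)

lemma is_qderivation_qder: "is_qderivation R (qder R F)"
  unfolding is_qderivation_def
proof (intro conjI ballI allI)
  fix X Y c
  assume "X \<in> quot R"
  then obtain f where X: "X = cls R f" by (rule quot_cases)
  show "qder R F X \<in> quot R" by (simp add: X qder_cls cls_in_quot)
  show "qder R F (qscale R c X) = qscale R c (qder R F X)"
    by (simp add: X qder_cls qscale_cls derivation_const_mult[OF der])
  assume "Y \<in> quot R"
  then obtain g where Y: "Y = cls R g" by (rule quot_cases)
  show "qder R F (qadd R X Y) = qadd R (qder R F X) (qder R F Y)"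
    by (simp add: X Y qder_cls qadd_cls derivation_add[OF der])
  show "qder R F (qmul R X Y) = qadd R (qmul R X (qder R F Y)) (qmul R Y (qder R F X))"
    by (simp add: X Y qder_cls qadd_cls qmul_cls derivation_mult[OF der])
qed

lemma q_locally_nilpotent_qder: "locally_nilpotent F \<Longrightarrow> q_locally_nilpotent R (qder R F)"
  unfolding q_locally_nilpotent_def locally_nilpotent_def
  by (auto elim!: quot_cases simp: qder_funpow_cls) metis

lemma q_whomog_derivation_qder:
  assumes "\<And>d p. whomog w d p \<Longrightarrow> whomog w (d + s) (F p)"
  shows "q_whomog_derivation w R (qder R F)"
  unfolding q_whomog_derivation_def qhomog_def
proof (intro exI[of _ s] allI impI)
  fix m X assume "\<exists>p. whomog w m p \<and> X = cls R p"
  then obtain p where "whomog w m p" "X = cls R p" by blast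
  then show "\<exists>q. whomog w (m + s) q \<and> qder R F X = cls R q"
    by (intro exI[of _ "F p"]) (simp add: assms qder_cls)
qed

lemma qder_nonzero: "\<not> R dvd F f \<Longrightarrow> \<exists>X\<in>quot R. qder R F X \<noteq> cls R 0"
  by (intro bexI[of _ "cls R f"] cls_in_quot) (simp add: qder_cls cls_eq_iff)

end

theorem lemma8:
  fixes w :: "'n::{finite, linorder} \<Rightarrow> real"
    and R :: "('n, 'k::field_char_0) mpoly"
  assumes "alg_closed TYPE('k)"
    and "pos_weights w"
    and "R \<notin> range const"
    and "irreducible R"
    and "\<exists>e. whomog w e R"
    and "\<exists>D. is_derivation D \<and> locally_nilpotent D \<and> D \<noteq> (\<lambda>_. 0) \<and> D R = 0"
  shows "\<exists>d. is_qderivation R d \<and> q_locally_nilpotent R d \<and> q_whomog_derivation w R d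
             \<and> (\<exists>X\<in>quot R. d X \<noteq> cls R 0)"
proof -
  obtain e where hR: "whomog w e R" using assms(5) by blast
  have R0: "R \<noteq> 0" using assms(3) const_0 by (metis rangeI)
  obtain k where "k \<in> Poly_Mapping.keys R" "k \<noteq> 0"
    using eq_const_if_keys_subset_0[of R] assms(3) by blast
  then have e0: "e > 0" using hR wdeg_pos[OF assms(2)] by (auto simp: whomog_def)
  obtain D where "is_derivation D" "locally_nilpotent D" "D \<noteq> (\<lambda>_. 0)" "D R = 0"
    using assms(6) by blast
  then obtain E s i where E: "whomog_lnd w R E s" "E (mvar i) \<noteq> 0"
    using exists_whomog_lnd[OF _ _ _ _ hR] by blast
  obtain n where "w i + s < real n * e" using ex_less_of_nat_mult[OF e0] by blast
  then obtain F s' j where F: "whomog_lnd w R F s'" "\<not> R dvd F (mvar j)"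
    using whomog_lnd_not_dvd_mvar[OF R0 hR assms(2) e0 E] by blast
  then have der: "is_derivation F" and FR: "F R = 0"
    unfolding whomog_lnd_def by auto
  show ?thesis
  proof (intro exI conjI)
    show "is_qderivation R (qder R F)" by (rule is_qderivation_qder[OF der FR])
    show "q_locally_nilpotent R (qder R F)"
      using F(1) unfolding whomog_lnd_def by (intro q_locally_nilpotent_qder[OF der FR]) blast
    show "q_whomog_derivation w R (qder R F)"
      using F(1) unfolding whomog_lnd_def by (intro q_whomog_derivation_qder[OF der FR]) blast
    show "\<exists>X\<in>quot R. qder R F X \<noteq> cls R 0" by (rule qder_nonzero[OF der FR F(2)])
  qed
qed

end
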